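(* Let $M'=M[D,K]$ be a compatible minor of the weighted uncertainty matroid $\mathcal{M}$ such that $M'$ contains no non-trivial element $f$ with either (a) $w_f=L_f$ and $f$ a maximum-weight element of some circuit of $M'$, or (b) $w_f=U_f$ and $f$ a minimum-weight element of $E(M')\setminus\mathrm{span}_{M'}(B'\setminus\{f\})$ for some basis $B'$ of $M'$ containing $f$. Let $e$ be a trivial element of $M'$ such that (i) there exists a basis $B$ of $M'$ with $e\in B$ and (ii) $e$ has minimum weight among the elements of $E(M')$ not in $\mathrm{span}_{M'}(B\setminus\{e\})$. Then $M[D,K\cup\{e\}]$ is a compatible minor of $\mathcal{M}$.
   Context: A weighted uncertainty matroid $\mathcal{M}=(E,\mathcal{I},A,w)$ consists of a matroid $M=(E,\mathcal{I})$ on a finite set $E$, for each $e\in E$ a non-empty finite union $A_e$ of bounded real intervals (each open or closed), a weight $w_e\in A_e$, and a query cost $c_e\ge0$. $L_e=\inf A_e$, $U_e=\sup A_e$; $e$ is trivial if $A_e=\{w_e\}$. A minimum-weight basis (MWB) is a basis minimizing total weight. A weight assignment is $w^*$ with $w^*_e\in A_e$, consistent with $Q$ if $w^*_e=w_e$ on $Q$. $Q$ verifies an MWB $B$ if for every weight assignment consistent with $Q$, $B$ is an MWB with respect to it; a certificate for $\mathcal{M}$ is a set verifying some MWB, and $c^*$ denotes the minimum cost $\sum_{e\in Q}c_e$ of a certificate for $\mathcal{M}$. For $D,K\subseteq E$, $M[D,K]$ is the matroid obtained from $M$ by deleting $D$ and contracting $K$, ground set $E(M[D,K])=E\setminus(D\cup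 K)$, weights restricted. $M[D,K]$ is a compatible minor if there is a set $Q$ of cost $c^*$ verifying an MWB $B$ of $\mathcal{M}$ with $K\subseteq B$, $D\cap B=\emptyset$. $\mathrm{span}_N(X)=\{e: r_N(X\cup\{e\})=r_N(X)\}$. *)

theory Defs
  imports Complex_Main
begin

definition matroid :: "'a set \<Rightarrow> ('a set \<Rightarrow> bool) \<Rightarrow> bool" where
  "matroid E indep \<longleftrightarrow>
     finite E \<and> indep {} \<and>
     (\<forall>I. indep I \<longrightarrow> I \<subseteq> E) \<and>
     (\<forall>I J. indep J \<and> I \<subseteq> J \<longrightarrow> indep I) \<and>
     (\<forall>I J. indep I \<and> indep J \<and> card I < card J \<longrightarrow> (\<exists>x\<in>J - I. indep (insert x I)))"

definition mrank :: "('a set \<Rightarrow> bool) \<Rightarrow> 'a set \<Rightarrow> nat" where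
  "mrank indep X = Max (card ` {I. I \<subseteq> X \<and> indep I})"

definition basis :: "'a set \<Rightarrow> ('a set \<Rightarrow> bool) \<Rightarrow> 'a set \<Rightarrow> bool" where
  "basis E indep B \<longleftrightarrow> indep B \<and> (\<forall>x\<in>E - B. \<not> indep (insert x B))"

definition circuit :: "'a set \<Rightarrow> ('a set \<Rightarrow> bool) \<Rightarrow> 'a set \<Rightarrow> bool" where
  "circuit E indep C \<longleftrightarrow> C \<subseteq> E \<and> \<not> indep C \<and> (\<forall>x\<in>C. indep (C - {x}))"

definition mspan :: "'a set \<Rightarrow> ('a set \<Rightarrow> bool) \<Rightarrow> 'a set \<Rightarrow> 'a set" where
  "mspan E indep X = {x\<in>E. mrank indep (insert x X) = mrank indep X}"

text \<open>The minor M[D,K]: delete D, contract K. Ground set E - (D \<union> K); rank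
  r'(X) = r(X \<union> K) - r(K), so I is independent iff r(I \<union> K) = |I| + r(K).\<close>
definition minor_ground :: "'a set \<Rightarrow> 'a set \<Rightarrow> 'a set \<Rightarrow> 'a set" where
  "minor_ground E D K = E - (D \<union> K)"

definition minor_indep :: "'a set \<Rightarrow> ('a set \<Rightarrow> bool) \<Rightarrow> 'a set \<Rightarrow> 'a set \<Rightarrow> 'a set \<Rightarrow> bool" where
  "minor_indep E indep D K I \<longleftrightarrow>
     I \<subseteq> E - (D \<union> K) \<and> mrank indep (I \<union> K) = card I + mrank indep K"

definition oc_interval :: "real set \<Rightarrow> bool" where
  "oc_interval S \<longleftrightarrow> (\<exists>a b. (a \<le> b \<and> S = {a..b}) \<or> (a < b \<and> S = {a<..<b}))"

definition uncertainty_set :: "real set \<Rightarrow> bool" where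
  "uncertainty_set S \<longleftrightarrow> S \<noteq> {} \<and>
     (\<exists>\<F>. finite \<F> \<and> (\<forall>J\<in>\<F>. oc_interval J) \<and> S = \<Union>\<F>)"

definition wum :: "'a set \<Rightarrow> ('a set \<Rightarrow> bool) \<Rightarrow> ('a \<Rightarrow> real set) \<Rightarrow> ('a \<Rightarrow> real)
                     \<Rightarrow> ('a \<Rightarrow> real) \<Rightarrow> bool" where
  "wum E indep A w c \<longleftrightarrow> matroid E indep \<and>
     (\<forall>e\<in>E. uncertainty_set (A e) \<and> w e \<in> A e \<and> c e \<ge> 0)"

definition lower :: "('a \<Rightarrow> real set) \<Rightarrow> 'a \<Rightarrow> real" where
  "lower A e = Inf (A e)"

definition upper :: "('a \<Rightarrow> real set) \<Rightarrow> 'a \<Rightarrow> real" where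
  "upper A e = Sup (A e)"

definition trivial :: "('a \<Rightarrow> real set) \<Rightarrow> ('a \<Rightarrow> real) \<Rightarrow> 'a \<Rightarrow> bool" where
  "trivial A w e \<longleftrightarrow> A e = {w e}"

definition mwb :: "'a set \<Rightarrow> ('a set \<Rightarrow> bool) \<Rightarrow> ('a \<Rightarrow> real) \<Rightarrow> 'a set \<Rightarrow> bool" where
  "mwb E indep v B \<longleftrightarrow> basis E indep B \<and>
     (\<forall>B'. basis E indep B' \<longrightarrow> sum v B \<le> sum v B')"

definition weight_assignment :: "'a set \<Rightarrow> ('a \<Rightarrow> real set) \<Rightarrow> ('a \<Rightarrow> real) \<Rightarrow> bool" where
  "weight_assignment E A v \<longleftrightarrow> (\<forall>e\<in>E. v e \<in> A e)"

definition consistent :: "('a \<Rightarrow> real) \<Rightarrow> 'a set \<Rightarrow> ('a \<Rightarrow> real) \<Rightarrow> bool" where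
  "consistent w Q v \<longleftrightarrow> (\<forall>e\<in>Q. v e = w e)"

definition verifies :: "'a set \<Rightarrow> ('a set \<Rightarrow> bool) \<Rightarrow> ('a \<Rightarrow> real set) \<Rightarrow> ('a \<Rightarrow> real)
                          \<Rightarrow> 'a set \<Rightarrow> 'a set \<Rightarrow> bool" where
  "verifies E indep A w Q B \<longleftrightarrow> Q \<subseteq> E \<and>
     (\<forall>v. weight_assignment E A v \<and> consistent w Q v \<longrightarrow> mwb E indep v B)"

definition certificate :: "'a set \<Rightarrow> ('a set \<Rightarrow> bool) \<Rightarrow> ('a \<Rightarrow> real set) \<Rightarrow> ('a \<Rightarrow> real)
                          \<Rightarrow> 'a set \<Rightarrow> bool" where
  "certificate E indep A w Q \<longleftrightarrow> (\<exists>B. verifies E indep A w Q B)"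

definition opt_cost :: "'a set \<Rightarrow> ('a set \<Rightarrow> bool) \<Rightarrow> ('a \<Rightarrow> real set) \<Rightarrow> ('a \<Rightarrow> real)
                          \<Rightarrow> ('a \<Rightarrow> real) \<Rightarrow> real" where
  "opt_cost E indep A w c = Min {sum c Q | Q. certificate E indep A w Q}"

definition compatible_minor :: "'a set \<Rightarrow> ('a set \<Rightarrow> bool) \<Rightarrow> ('a \<Rightarrow> real set) \<Rightarrow> ('a \<Rightarrow> real)
                          \<Rightarrow> ('a \<Rightarrow> real) \<Rightarrow> 'a set \<Rightarrow> 'a set \<Rightarrow> bool" where
  "compatible_minor E indep A w c D K \<longleftrightarrow>
     (\<exists>Q B. verifies E indep A w Q B \<and> sum c Q = opt_cost E indep A w c \<and>
            K \<subseteq> B \<and> D \<inter> B = {})"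

end

theory Submission
  imports Defs
begin

(* Take an optimal certificate Q verifying a minimum-weight basis B0 with K \<subseteq> B0 and
   D \<inter> B0 = {}. If e \<in> B0 we are done. Otherwise B0 - K is a minimum-weight basis of M',
   and the symmetric exchange property against the basis B of M' in which e is the lightest
   element of its fundamental cocircuit gives f \<in> B0 - K such that B1 = B0 - f + e is a basis
   and w f = w e (\<le> by the choice of e, \<ge> by minimality of B0). Then f is the lightest
   element of its own fundamental cocircuit, so by (b) f is trivial or w f < U f. If f were
   moreover unqueried, raising its value above w f would be consistent with Q and make B1
   lighter than B0. Hence every weight assignment consistent with Q gives e and f equal
   weights, and Q verifies B1 \<supseteq> K \<union> {e}. *)

lemma matroid_finite_ground: "matroid E ind \<Longrightarrow> finite E"
  unfolding matroid_def by blast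

lemma matroid_indep_empty: "matroid E ind \<Longrightarrow> ind {}"
  unfolding matroid_def by blast

lemma matroid_indep_subset: "matroid E ind \<Longrightarrow> ind I \<Longrightarrow> I \<subseteq> E"
  unfolding matroid_def by blast

lemma matroid_finite_indep: "matroid E ind \<Longrightarrow> ind I \<Longrightarrow> finite I"
  unfolding matroid_def by (meson finite_subset)

lemma matroid_indep_mono: "matroid E ind \<Longrightarrow> ind J \<Longrightarrow> I \<subseteq> J \<Longrightarrow> ind I"
  unfolding matroid_def by blast

lemma matroid_augment:
  "matroid E ind \<Longrightarrow> ind I \<Longrightarrow> ind J \<Longrightarrow> card I < card J \<Longrightarrow> \<exists>x\<in>J - I. ind (insert x I)"
  unfolding matroid_def by blast

lemma ex_maximal_indep_between:
  assumes M: "matroid E ind" and "ind X" and "X \<subseteq> Y"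
  obtains J where "X \<subseteq> J" "J \<subseteq> Y" "ind J" "\<And>y. y \<in> Y - J \<Longrightarrow> \<not> ind (insert y J)"
proof -
  let ?S = "{J. X \<subseteq> J \<and> J \<subseteq> Y \<and> ind J}"
  have "?S \<subseteq> Pow E"
    using matroid_indep_subset[OF M] by blast
  then have "finite ?S"
    using matroid_finite_ground[OF M] by (meson finite_Pow_iff finite_subset)
  moreover have "X \<in> ?S"
    using assms by blast
  ultimately obtain J where J: "J \<in> ?S" and max: "\<forall>J'\<in>?S. J \<subseteq> J' \<longrightarrow> J = J'"
    using finite_has_maximal[of ?S] by blast
  show thesis
  proof (rule that)
    fix y assume y: "y \<in> Y - J"
    show "\<not> ind (insert y J)"
    proof
      assume "ind (insert y J)"
      then have "insert y J \<in> ?S" using J y by blast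
      then show False using max y by blast
    qed
  qed (use J in auto)
qed

lemma card_le_mrank:
  assumes "finite X" "I \<subseteq> X" "ind I"
  shows "card I \<le> mrank ind X"
  unfolding mrank_def using assms by (intro Max_ge) auto

lemma mrank_le_card:
  assumes M: "matroid E ind" and "finite X"
  shows "mrank ind X \<le> card X"
  unfolding mrank_def using assms matroid_indep_empty[OF M]
  by (intro Max.boundedI) (auto intro: card_mono)

lemma mrank_eq_card_iff:
  assumes M: "matroid E ind" and fin: "finite X"
  shows "mrank ind X = card X \<longleftrightarrow> ind X"
proof
  assume "mrank ind X = card X"
  moreover have "mrank ind X \<in> card ` {I. I \<subseteq> X \<and> ind I}"
    unfolding mrank_def using fin matroid_indep_empty[OF M] by (intro Max_in) auto
  ultimately obtain I where "I \<subseteq> X" "ind I" "card I = card X"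
    by auto
  then show "ind X"
    using card_subset_eq[OF fin] by metis
next
  assume "ind X"
  then show "mrank ind X = card X"
    using card_le_mrank[OF fin] mrank_le_card[OF M fin] by (meson order_refl le_antisym)
qed

lemma mem_mspan: "g \<in> E \<Longrightarrow> g \<in> X \<Longrightarrow> g \<in> mspan E ind X"
  unfolding mspan_def by (simp add: insert_absorb)

lemma not_mem_mspan_iff:
  assumes M: "matroid E ind" and X: "ind X" and "g \<in> E" "g \<notin> X"
  shows "g \<notin> mspan E ind X \<longleftrightarrow> ind (insert g X)"
proof -
  have fin: "finite X" "finite (insert g X)"
    using matroid_finite_indep[OF M X] by auto
  have "card X \<le> mrank ind (insert g X)" "mrank ind (insert g X) \<le> card X + 1"
    using card_le_mrank[of "insert g X" X ind] mrank_le_card[OF M fin(2)] X fin \<open>g \<notin> X\<close> by auto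
  then show ?thesis
    using mrank_eq_card_iff[OF M fin(2)] mrank_eq_card_iff[OF M fin(1)] X fin \<open>g \<in> E\<close> \<open>g \<notin> X\<close>
    unfolding mspan_def by auto
qed

lemma indep_notin_mspan_Diff:
  assumes M: "matroid E ind" and "ind B" "f \<in> B"
  shows "f \<in> E - mspan E ind (B - {f})"
  using not_mem_mspan_iff[OF M, of "B - {f}" f] matroid_indep_mono[OF M] matroid_indep_subset[OF M] assms
  by (auto simp: insert_absorb)

lemma card_insert_Diff_swap:
  assumes "finite B" "f \<in> B" "g \<notin> B"
  shows "card (insert g (B - {f})) = card B"
  using assms by (simp add: card_Diff_singleton) (metis card_gt_0_iff empty_iff Suc_pred)

lemma sum_insert_Diff_swap:
  fixes v :: "'a \<Rightarrow> 'b::ab_group_add"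
  assumes "finite B" "f \<in> B" "g \<notin> B"
  shows "sum v (insert g (B - {f})) = sum v B - v f + v g"
  using assms sum.remove[OF assms(1,2), of v] by (simp add: algebra_simps)

lemma indep_card_le_basis:
  assumes M: "matroid E ind" and B: "basis E ind B" and I: "ind I"
  shows "card I \<le> card B"
proof (rule ccontr)
  assume "\<not> card I \<le> card B"
  then obtain x where "x \<in> I - B" "ind (insert x B)"
    using matroid_augment[OF M _ I] B unfolding basis_def by force
  then show False
    using B matroid_indep_subset[OF M I] unfolding basis_def by blast
qed

lemma basis_card_eq:
  "matroid E ind \<Longrightarrow> basis E ind B \<Longrightarrow> basis E ind B' \<Longrightarrow> card B = card B'"
  using indep_card_le_basis unfolding basis_def by (metis le_antisym)

lemma basis_if_card_eq:
  assumes M: "matroid E ind" and "basis E ind B" "ind X" "card X = card B"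
  shows "basis E ind X"
  unfolding basis_def
proof (intro conjI ballI notI \<open>ind X\<close>)
  fix x assume "x \<in> E - X" "ind (insert x X)"
  then show False
    using indep_card_le_basis[OF M \<open>basis E ind B\<close>, of "insert x X"] assms(4)
      matroid_finite_indep[OF M \<open>ind X\<close>] by simp
qed

lemma basis_insert_Diff:
  assumes M: "matroid E ind" and B: "basis E ind B" and "f \<in> B" "g \<notin> B"
    and "ind (insert g (B - {f}))"
  shows "basis E ind (insert g (B - {f}))"
  using assms basis_if_card_eq[OF M B] card_insert_Diff_swap matroid_finite_indep[OF M]
  unfolding basis_def by metis

lemma basis_exchangeable_insert_dependent:
  assumes M: "matroid E ind" and B: "basis E ind B" and e: "e \<in> E - B"
  shows "\<not> ind (insert e {f\<in>B. ind (insert e (B - {f}))})"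
    (is "\<not> ind (insert e ?Z)")
proof
  assume indep: "ind (insert e ?Z)"
  have "insert e ?Z \<subseteq> insert e B"
    by blast
  then obtain J where J: "insert e ?Z \<subseteq> J" "J \<subseteq> insert e B" "ind J"
    and max: "\<And>y. y \<in> insert e B - J \<Longrightarrow> \<not> ind (insert y J)"
    by (rule ex_maximal_indep_between[OF M indep]) (rule that)
  have finB: "finite B"
    using B matroid_finite_indep[OF M] unfolding basis_def by blast
  have "J \<noteq> insert e B"
    using J(3) B e unfolding basis_def by blast
  then obtain f where f: "f \<in> B" "f \<notin> J" "f \<noteq> e"
    using J(1,2) by blast
  have "\<not> card J < card B"
  proof
    assume "card J < card B"
    then obtain x where "x \<in> B - J" "ind (insert x J)"
      using matroid_augment[OF M J(3)] B unfolding basis_def by blast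
    then show False
      using max by blast
  qed
  moreover have "J \<subseteq> insert e (B - {f})"
    using J(2) f by blast
  moreover have "card (insert e (B - {f})) = card B"
    using card_insert_Diff_swap[OF finB f(1)] e by blast
  ultimately have "J = insert e (B - {f})"
    using card_seteq[of "insert e (B - {f})" J] finB by simp
  then show False
    using J(1,3) f by blast
qed

(* Span-free form of: Z \<subseteq> span (B - e) would give e \<in> span Z \<subseteq> span (B - e). *)
lemma exchange_from_dependent_insert:
  assumes M: "matroid E ind" and B: "ind B" "e \<in> B"
    and Z: "ind Z" "\<not> ind (insert e Z)"
  shows "\<exists>f\<in>Z - B. ind (insert f (B - {e}))"
proof (rule ccontr)
  assume none: "\<not> ?thesis"
  let ?I = "B - {e}"
  have "Z \<subseteq> ?I \<union> Z"
    by blast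
  then obtain J where J: "Z \<subseteq> J" "J \<subseteq> ?I \<union> Z" "ind J"
    and max: "\<And>y. y \<in> (?I \<union> Z) - J \<Longrightarrow> \<not> ind (insert y J)"
    by (rule ex_maximal_indep_between[OF M Z(1)]) (rule that)
  have I: "ind ?I"
    using matroid_indep_mono[OF M B(1)] by blast
  have "e \<notin> Z"
    using Z by (metis insert_absorb)
  have "\<not> card ?I < card J"
  proof
    assume "card ?I < card J"
    then obtain x where "x \<in> J - ?I" "ind (insert x ?I)"
      using matroid_augment[OF M I J(3)] by blast
    then show False
      using none J(2) \<open>e \<notin> Z\<close> by blast
  qed
  then have "card J < card B"
    using card_Diff1_less[OF matroid_finite_indep[OF M B(1)] B(2)] by linarith
  then obtain x where x: "x \<in> B - J" "ind (insert x J)"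
    using matroid_augment[OF M J(3) B(1)] by blast
  show False
  proof (cases "x = e")
    case True
    then show False
      using x J(1) Z(2) matroid_indep_mono[OF M x(2)] by blast
  next
    case False
    then show False
      using x max by blast
  qed
qed

lemma symmetric_basis_exchange:
  assumes M: "matroid E ind" and B0: "basis E ind B0" and B: "ind B" "e \<in> B" "e \<notin> B0"
  shows "\<exists>f\<in>B0 - B. ind (insert e (B0 - {f})) \<and> ind (insert f (B - {e}))"
proof -
  \<comment> \<open>?Z is the fundamental circuit of e with respect to B0, minus e.\<close>
  let ?Z = "{f\<in>B0. ind (insert e (B0 - {f}))}"
  have "e \<in> E"
    using matroid_indep_subset[OF M B(1)] B(2) by blast
  then have "\<not> ind (insert e ?Z)"
    using basis_exchangeable_insert_dependent[OF M B0] B(3) by blast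
  moreover have "ind ?Z"
    using B0 matroid_indep_mono[OF M] unfolding basis_def by (metis (no_types, lifting) mem_Collect_eq subsetI)
  ultimately obtain f where "f \<in> ?Z - B" "ind (insert f (B - {e}))"
    using exchange_from_dependent_insert[OF M B(1,2)] by blast
  then show ?thesis
    by blast
qed

lemma mwb_swap_le:
  assumes M: "matroid E ind" and B: "mwb E ind w B" and "f \<in> B" "g \<notin> B"
    and "basis E ind (insert g (B - {f}))"
  shows "w f \<le> w g"
proof -
  have "finite B"
    using B matroid_finite_indep[OF M] unfolding mwb_def basis_def by blast
  moreover have "sum w B \<le> sum w (insert g (B - {f}))"
    using assms unfolding mwb_def by blast
  ultimately show ?thesis
    using sum_insert_Diff_swap[of B f g w] assms by simp
qed

lemma mwb_le_outside_mspan: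
  assumes M: "matroid E ind" and B: "mwb E ind w B" and f: "f \<in> B"
    and g: "g \<in> E - mspan E ind (B - {f})"
  shows "w f \<le> w g"
proof (cases "g = f")
  case False
  have bas: "basis E ind B"
    using B unfolding mwb_def by blast
  then have I: "ind (B - {f})"
    using matroid_indep_mono[OF M] unfolding basis_def by blast
  have "g \<notin> B"
    using g False mem_mspan[of g E "B - {f}"] by blast
  then have "ind (insert g (B - {f}))"
    using not_mem_mspan_iff[OF M I] g by blast
  then show ?thesis
    using mwb_swap_le[OF M B f \<open>g \<notin> B\<close>] basis_insert_Diff[OF M bas f \<open>g \<notin> B\<close>] by blast
qed simp

lemma mwb_exchange_min_outside_mspan:
  assumes M: "matroid E ind" and B0: "mwb E ind w B0" and e: "e \<notin> B0"
    and B: "basis E ind B" "e \<in> B"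
    and e_min: "\<forall>g\<in>E - mspan E ind (B - {e}). w e \<le> w g"
  obtains f where "f \<in> B0" "basis E ind (insert e (B0 - {f}))" "w f = w e"
proof -
  have bas0: "basis E ind B0"
    using B0 unfolding mwb_def by blast
  obtain f where f: "f \<in> B0 - B" "ind (insert e (B0 - {f}))" "ind (insert f (B - {e}))"
    using symmetric_basis_exchange[OF M bas0 _ B(2) e] B(1) unfolding basis_def by blast
  have "ind (B - {e})"
    using B(1) matroid_indep_mono[OF M] unfolding basis_def by blast
  moreover have "f \<in> E"
    using f(1) bas0 matroid_indep_subset[OF M] unfolding basis_def by blast
  ultimately have "f \<in> E - mspan E ind (B - {e})"
    using not_mem_mspan_iff[OF M] f by blast
  then have "w e \<le> w f"
    using e_min by blast
  moreover have bas1: "basis E ind (insert e (B0 - {f}))"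
    using basis_insert_Diff[OF M bas0 _ e f(2)] f by blast
  moreover have "w f \<le> w e"
    using mwb_swap_le[OF M B0 _ e bas1] f by blast
  ultimately show thesis
    using that f by force
qed

lemma minor_indep_iff:
  assumes M: "matroid E ind" and K: "ind K"
  shows "minor_indep E ind D K I \<longleftrightarrow> I \<subseteq> E - (D \<union> K) \<and> ind (I \<union> K)"
proof (cases "I \<subseteq> E - (D \<union> K)")
  case True
  have fin: "finite K" "finite I"
    using matroid_finite_indep[OF M K] True matroid_finite_ground[OF M] finite_subset by blast+
  then have "card (I \<union> K) = card I + card K"
    using True by (subst card_Un_disjoint) auto
  then show ?thesis
    unfolding minor_indep_def
    using mrank_eq_card_iff[OF M, of "I \<union> K"] mrank_eq_card_iff[OF M fin(1)] K fin True by simp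
qed (simp add: minor_indep_def)

lemma minor_matroid:
  assumes M: "matroid E ind" and K: "ind K"
  shows "matroid (minor_ground E D K) (minor_indep E ind D K)"
proof -
  have card_Un: "card (X \<union> K) = card X + card K" if "X \<subseteq> E - (D \<union> K)" for X
    using that matroid_finite_ground[OF M] matroid_finite_indep[OF M K]
    by (subst card_Un_disjoint) (auto intro: finite_subset)
  have aug: "\<exists>x\<in>J - I. ind (insert x I \<union> K)"
    if hyps: "I \<subseteq> E - (D \<union> K)" "J \<subseteq> E - (D \<union> K)" "ind (I \<union> K)" "ind (J \<union> K)"
      "card I < card J" for I J
  proof -
    have "card (I \<union> K) < card (J \<union> K)"
      using hyps card_Un by simp
    then obtain x where "x \<in> (J \<union> K) - (I \<union> K)" "ind (insert x (I \<union> K))"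
      using matroid_augment[OF M hyps(3,4)] by blast
    then show ?thesis
      by auto
  qed
  have down: "ind (I \<union> K)" if "ind (J \<union> K)" "I \<subseteq> J" for I J
    using that matroid_indep_mono[OF M] by (meson Un_mono order_refl)
  show ?thesis
    unfolding matroid_def minor_indep_iff[OF M K] minor_ground_def
  proof (intro conjI allI impI)
    fix I J
    assume "(I \<subseteq> E - (D \<union> K) \<and> ind (I \<union> K)) \<and> (J \<subseteq> E - (D \<union> K) \<and> ind (J \<union> K)) \<and> card I < card J"
    then show "\<exists>x\<in>J - I. insert x I \<subseteq> E - (D \<union> K) \<and> ind (insert x I \<union> K)"
      using aug[of I J] by blast
  qed (use matroid_finite_ground[OF M] K down in auto)
qed

lemma minor_basis_Diff:
  assumes M: "matroid E ind" and B0: "basis E ind B0" and "K \<subseteq> B0" "D \<inter> B0 = {}"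
  shows "basis (minor_ground E D K) (minor_indep E ind D K) (B0 - K)"
proof -
  have K: "ind K"
    using B0 assms(3) matroid_indep_mono[OF M] unfolding basis_def by blast
  have "B0 \<subseteq> E"
    using B0 matroid_indep_subset[OF M] unfolding basis_def by blast
  moreover have "B0 - K \<union> K = B0" "insert x (B0 - K) \<union> K = insert x B0" for x
    using assms(3) by blast+
  ultimately show ?thesis
    using B0 assms(4) unfolding basis_def minor_indep_iff[OF M K] minor_ground_def by auto
qed

lemma basis_Un_of_minor_basis:
  assumes M: "matroid E ind" and B0: "basis E ind B0" and KB0: "K \<subseteq> B0" and "D \<inter> B0 = {}"
    and X: "basis (minor_ground E D K) (minor_indep E ind D K) X"
  shows "basis E ind (X \<union> K)"
proof -
  have K: "ind K"
    using B0 KB0 matroid_indep_mono[OF M] unfolding basis_def by blast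
  have fin: "finite B0" "finite K"
    using B0 K matroid_finite_indep[OF M] unfolding basis_def by blast+
  have X': "X \<subseteq> E - (D \<union> K)" "ind (X \<union> K)"
    using X unfolding basis_def minor_indep_iff[OF M K] by auto
  have "card X = card (B0 - K)"
    using basis_card_eq[OF minor_matroid[OF M K] X minor_basis_Diff[OF M B0 KB0 assms(4)]] .
  moreover have "card (X \<union> K) = card X + card K"
    using X' matroid_finite_ground[OF M] fin by (subst card_Un_disjoint) (auto intro: finite_subset)
  moreover have "card B0 = card (B0 - K) + card K"
    using fin KB0 by (simp add: card_Diff_subset card_mono)
  ultimately show ?thesis
    using basis_if_card_eq[OF M B0 X'(2)] by simp
qed

lemma minor_mwb_Diff:
  assumes M: "matroid E ind" and B0: "mwb E ind w B0" and KB0: "K \<subseteq> B0" and "D \<inter> B0 = {}"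
  shows "mwb (minor_ground E D K) (minor_indep E ind D K) w (B0 - K)"
  unfolding mwb_def
proof (intro conjI allI impI)
  have bas0: "basis E ind B0"
    using B0 unfolding mwb_def by blast
  then show "basis (minor_ground E D K) (minor_indep E ind D K) (B0 - K)"
    using minor_basis_Diff[OF M _ KB0 assms(4)] by blast
  fix X assume X: "basis (minor_ground E D K) (minor_indep E ind D K) X"
  have fin: "finite B0" "finite X"
    using bas0 X matroid_finite_indep[OF M] matroid_finite_indep[OF minor_matroid[OF M]]
      matroid_indep_mono[OF M] KB0 unfolding basis_def by meson+
  have "X \<inter> K = {}"
    using X matroid_indep_subset[OF minor_matroid[OF M]] matroid_indep_mono[OF M] bas0 KB0
    unfolding basis_def minor_ground_def by blast
  have "sum w B0 \<le> sum w (X \<union> K)"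
    using B0 basis_Un_of_minor_basis[OF M bas0 KB0 assms(4) X] unfolding mwb_def by blast
  also have "\<dots> = sum w X + sum w K"
    using fin KB0 \<open>X \<inter> K = {}\<close> by (intro sum.union_disjoint) (auto intro: finite_subset)
  finally show "sum w (B0 - K) \<le> sum w X"
    using sum.subset_diff[OF KB0 fin(1), of w] by simp
qed

lemma verifies_values_le_exchange:
  assumes M: "matroid E ind" and w: "weight_assignment E A w" and ver: "verifies E ind A w Q B0"
    and f: "f \<in> B0 - Q" and g: "g \<notin> B0" and B1: "basis E ind (insert g (B0 - {f}))"
    and x: "x \<in> A f"
  shows "x \<le> w g"
proof -
  let ?v = "w(f := x)"
  have "mwb E ind ?v B0"
    using ver w x f unfolding verifies_def weight_assignment_def consistent_def by auto
  then have "?v f \<le> ?v g"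
    using mwb_swap_le[OF M _ _ g B1] f by blast
  moreover have "g \<noteq> f"
    using f g by blast
  ultimately show ?thesis
    by simp
qed

lemma verifies_swap_trivial:
  assumes M: "matroid E ind" and w: "weight_assignment E A w" and ver: "verifies E ind A w Q B0"
    and f: "f \<in> B0" and e: "e \<in> E - B0" "trivial A w e"
    and B1: "basis E ind (insert e (B0 - {f}))" and "w f = w e"
    and f_pinned: "f \<in> Q \<or> trivial A w f \<or> w f \<noteq> upper A f"
  shows "verifies E ind A w Q (insert e (B0 - {f}))"
proof -
  have bas0: "basis E ind B0"
    using ver w unfolding verifies_def consistent_def mwb_def by blast
  then have fE: "f \<in> E" and fin: "finite B0"
    using f matroid_indep_subset[OF M] matroid_finite_indep[OF M] unfolding basis_def by blast+
  have f_fixed: "v f = w f" if v: "weight_assignment E A v" "consistent w Q v" for v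
  proof -
    have "f \<in> Q \<or> trivial A w f"
    proof (rule ccontr)
      assume "\<not> (f \<in> Q \<or> trivial A w f)"
      then have "f \<in> B0 - Q" and not_upper: "w f \<noteq> upper A f"
        using f f_pinned by auto
      have "x \<le> w f" if "x \<in> A f" for x
        using verifies_values_le_exchange[OF M w ver \<open>f \<in> B0 - Q\<close> _ B1 that] e \<open>w f = w e\<close> by simp
      moreover have "w f \<in> A f"
        using w fE unfolding weight_assignment_def by blast
      ultimately have "upper A f = w f"
        unfolding upper_def by (rule cSup_eq_maximum[rotated])
      then show False
        using not_upper by simp
    qed
    then show ?thesis
      using v fE unfolding consistent_def weight_assignment_def trivial_def by blast
  qed
  have e_fixed: "v e = w e" if "weight_assignment E A v" for v
    using that e unfolding weight_assignment_def trivial_def by blast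
  have "sum v (insert e (B0 - {f})) = sum v B0"
    if v: "weight_assignment E A v" "consistent w Q v" for v
  proof -
    have "v f = v e"
      using f_fixed[OF v] e_fixed[OF v(1)] \<open>w f = w e\<close> by simp
    then show ?thesis
      using sum_insert_Diff_swap[OF fin f, of e v] e by simp
  qed
  then show ?thesis
    using ver B1 unfolding verifies_def mwb_def by simp
qed

theorem lemma20:
  fixes E :: "'a set" and indep :: "'a set \<Rightarrow> bool"
    and A :: "'a \<Rightarrow> real set" and w c :: "'a \<Rightarrow> real"
    and D K :: "'a set" and e :: 'a
  assumes wum: "wum E indep A w c"
    and compat: "compatible_minor E indep A w c D K"
    and no_a: "\<not> (\<exists>f\<in>minor_ground E D K. \<not> trivial A w f \<and> w f = lower A f \<and>
                  (\<exists>C. circuit (minor_ground E D K) (minor_indep E indep D K) C \<and> f \<in> C \<and>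
                       (\<forall>g\<in>C. w g \<le> w f)))"
    and no_b: "\<not> (\<exists>f\<in>minor_ground E D K. \<not> trivial A w f \<and> w f = upper A f \<and>
                  (\<exists>B'. basis (minor_ground E D K) (minor_indep E indep D K) B' \<and> f \<in> B' \<and>
                    f \<in> minor_ground E D K - mspan (minor_ground E D K) (minor_indep E indep D K) (B' - {f}) \<and>
                    (\<forall>g\<in>minor_ground E D K - mspan (minor_ground E D K) (minor_indep E indep D K) (B' - {f}).
                        w f \<le> w g)))"
    and e_in: "e \<in> minor_ground E D K"
    and e_triv: "trivial A w e"
    and e_basis: "\<exists>B. basis (minor_ground E D K) (minor_indep E indep D K) B \<and> e \<in> B \<and>
                    (\<forall>g\<in>minor_ground E D K - mspan (minor_ground E D K) (minor_indep E indep D K) (B - {e}).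
                        w e \<le> w g)"
  shows "compatible_minor E indep A w c D (K \<union> {e})"
proof -
  let ?E' = "minor_ground E D K" and ?I' = "minor_indep E indep D K"
  obtain Q B0 where ver: "verifies E indep A w Q B0" and cost: "sum c Q = opt_cost E indep A w c"
    and KB0: "K \<subseteq> B0" and DB0: "D \<inter> B0 = {}"
    using compat unfolding compatible_minor_def by blast
  have M: "matroid E indep" and w: "weight_assignment E A w"
    using wum unfolding wum_def weight_assignment_def by auto
  have mwb0: "mwb E indep w B0"
    using ver w unfolding verifies_def consistent_def by blast
  then have bas0: "basis E indep B0"
    unfolding mwb_def by blast
  have M': "matroid ?E' ?I'"
    using minor_matroid[OF M] matroid_indep_mono[OF M] bas0 KB0 unfolding basis_def by blast
  show ?thesis
  proof (cases "e \<in> B0")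
    case True
    then show ?thesis
      using ver cost KB0 DB0 unfolding compatible_minor_def by blast
  next
    case False
    have mwb0': "mwb ?E' ?I' w (B0 - K)"
      using minor_mwb_Diff[OF M mwb0 KB0 DB0] .
    obtain f where f: "f \<in> B0 - K" and bas1': "basis ?E' ?I' (insert e (B0 - K - {f}))"
      and "w f = w e"
      using e_basis False mwb_exchange_min_outside_mspan[OF M' mwb0'] by (metis DiffD1)
    have "insert e (B0 - K - {f}) \<union> K = insert e (B0 - {f})"
      using f KB0 by blast
    then have bas1: "basis E indep (insert e (B0 - {f}))"
      using basis_Un_of_minor_basis[OF M bas0 KB0 DB0 bas1'] by simp
    have "f \<in> ?E'"
      using f DB0 bas0 matroid_indep_subset[OF M] unfolding basis_def minor_ground_def by blast
    then have "trivial A w f \<or> w f \<noteq> upper A f"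
      using no_b minor_basis_Diff[OF M bas0 KB0 DB0] f mwb_le_outside_mspan[OF M' mwb0' f]
        indep_notin_mspan_Diff[OF M', of "B0 - K" f] unfolding basis_def by blast
    then have "verifies E indep A w Q (insert e (B0 - {f}))"
      using verifies_swap_trivial[OF M w ver _ _ e_triv bas1 \<open>w f = w e\<close>] f False e_in
      unfolding minor_ground_def by blast
    moreover have "K \<union> {e} \<subseteq> insert e (B0 - {f})" "D \<inter> insert e (B0 - {f}) = {}"
      using f KB0 DB0 e_in unfolding minor_ground_def by auto
    ultimately show ?thesis
      using cost unfolding compatible_minor_def by blast
  qed
qed

end
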